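(* Let $\mathbb{P}$ be a joint distribution over reports $\mathbf{p}^1,\dots,\mathbf{p}^m\in\Delta^n$ and outcome $J\in[n]$ satisfying the calibration property, and let $L(\mathbf{w}) := -\ln p^*_J(\mathbf{w})$ with $\partial_i L(\mathbf{w}) := \sum_{\ell=1}^n p^*_\ell(\mathbf{w})\ln p^i_\ell - \ln p^i_J$. Then for any weight vector $\mathbf{w}\in\Delta^m$, any $i\in[m]$ and any $\zeta\ge 0$, \[\Pr[\partial_i L(\mathbf{w}) \ge \zeta] \le n e^{-\zeta}\qquad\text{and}\qquad \Pr\left[\partial_i L(\mathbf{w}) \le -\frac{\zeta}{w_i}\right] \le m n^2 e^{-\zeta/n}.\]
   Context: $\Delta^k$ is the probability simplex in $\mathbb{R}^k$. For reports $\mathbf{p}^1,\dots,\mathbf{p}^m\in\Delta^n$ and $\mathbf{w}\in\Delta^m$, the logarithmic pool is $p^*_j(\mathbf{w}) = \frac{\prod_{k=1}^m (p^k_j)^{w_k}}{\sum_{\ell=1}^n\prod_{k=1}^m (p^k_\ell)^{w_k}}$. A joint distribution $\mathbb{P}$ over reports and outcome $J$ satisfies the calibration property if for every expert $i$, every $\mathbf{p}\in\Delta^n$ and every $j\in[n]$, $\Pr[J=j\mid \mathbf{p}^i=\mathbf{p}] = p_j$. *)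

theory Defs
  imports "HOL-Probability.Probability"
begin

definition prob_simplex :: "(real ^ 'k::finite) set" where
  "prob_simplex = {v. (\<forall>k. 0 \<le> v $ k) \<and> (\<Sum>k\<in>UNIV. v $ k) = 1}"

definition rpow :: "real \<Rightarrow> real \<Rightarrow> real" where
  "rpow x a = (if a = 0 then 1 else x powr a)"

definition log_pool :: "('m::finite \<Rightarrow> real ^ 'n::finite) \<Rightarrow> real ^ 'm \<Rightarrow> 'n \<Rightarrow> real" where
  "log_pool P w j =
     (\<Prod>k\<in>UNIV. rpow (P k $ j) (w $ k)) /
     (\<Sum>l\<in>UNIV. \<Prod>k\<in>UNIV. rpow (P k $ l) (w $ k))"

definition pool_loss :: "('m::finite \<Rightarrow> real ^ 'n::finite) \<Rightarrow> real ^ 'm \<Rightarrow> 'n \<Rightarrow> real" where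
  "pool_loss P w J = - ln (log_pool P w J)"

definition dL :: "('m::finite \<Rightarrow> real ^ 'n::finite) \<Rightarrow> real ^ 'm \<Rightarrow> 'm \<Rightarrow> 'n \<Rightarrow> real" where
  "dL P w i J = (\<Sum>l\<in>UNIV. log_pool P w l * ln (P i $ l)) - ln (P i $ J)"

text \<open>Calibration: Pr[J = j | p^i] = p^i_j almost surely, i.e. (definition of conditional
  probability) for every Borel set B of reports, Pr[J = j and p^i in B] = E[p^i_j 1{p^i in B}].\<close>
definition calibrated :: "'a measure \<Rightarrow> ('a \<Rightarrow> 'm \<Rightarrow> real ^ 'n) \<Rightarrow> ('a \<Rightarrow> 'n) \<Rightarrow> bool" where
  "calibrated M P J \<longleftrightarrow>
     (\<forall>i j. \<forall>B\<in>sets borel.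
        measure M {x\<in>space M. J x = j \<and> P x i \<in> B} =
        (\<integral>x. indicator B (P x i) * (P x i $ j) \<partial>M))"

end

theory Submission
  imports Defs
begin

text \<open>Write \<open>q\<^sub>l = \<Prod>\<^sub>k (p\<^sup>k\<^sub>l)\<^bsup>w\<^sub>k\<^esup>\<close> (\<open>pool_weight\<close>) for the unnormalised pool, so that
  \<open>p\<^sup>*\<^sub>l = q\<^sub>l / Z\<close> with \<open>Z = \<Sum>\<^sub>l q\<^sub>l\<close>. Both bounds reduce, pointwise, to the event that some
  report puts small probability on the realised outcome: if \<open>\<partial>\<^sub>iL \<ge> \<zeta>\<close> then
  \<open>p\<^sup>i\<^sub>J \<le> e\<^sup>-\<^sup>\<zeta>\<close>, because \<open>\<Sum>\<^sub>l p\<^sup>*\<^sub>l ln p\<^sup>i\<^sub>l \<le> 0\<close>; and if \<open>\<partial>\<^sub>iL \<le> -\<zeta>/w\<^sub>i\<close> then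
  \<open>\<zeta> \<le> w\<^sub>i \<Sum>\<^sub>l p\<^sup>*\<^sub>l (-ln p\<^sup>i\<^sub>l) \<le> \<Sum>\<^sub>l p\<^sup>*\<^sub>l (-ln q\<^sub>l) = H(p\<^sup>*) - ln Z \<le> ln n - ln q\<^sub>J\<close>,
  while the weighted geometric mean \<open>q\<^sub>J\<close> dominates \<open>min\<^sub>k p\<^sup>k\<^sub>J\<close>; hence some
  \<open>p\<^sup>k\<^sub>J \<le> n e\<^sup>-\<^sup>\<zeta>\<close>. Calibration gives \<open>Pr[J = j \<and> p\<^sup>k\<^sub>j \<le> c] = E[p\<^sup>k\<^sub>j; p\<^sup>k\<^sub>j \<le> c] \<le> c\<close>, so
  \<open>Pr[p\<^sup>k\<^sub>J \<le> c] \<le> n c\<close>, and a union bound over \<open>k\<close> finishes. The second bound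
  obtained this way, \<open>m n\<^sup>2 e\<^sup>-\<^sup>\<zeta>\<close>, is even stronger than the one claimed.\<close>

lemma prob_simplex_nonneg: "v \<in> prob_simplex \<Longrightarrow> 0 \<le> v $ k"
  by (simp add: prob_simplex_def)

lemma prob_simplex_sum: "v \<in> prob_simplex \<Longrightarrow> (\<Sum>k\<in>UNIV. v $ k) = 1"
  by (simp add: prob_simplex_def)

lemma prob_simplex_le_1: "v \<in> prob_simplex \<Longrightarrow> v $ k \<le> 1"
  by (metis prob_simplex_nonneg prob_simplex_sum finite UNIV_I member_le_sum)

lemma prob_simplex_ln_le_0: "v \<in> prob_simplex \<Longrightarrow> ln (v $ k) \<le> 0"
  using prob_simplex_nonneg[of v k] prob_simplex_le_1[of v k] by (cases "v $ k = 0") auto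

lemma rpow_nonneg: "0 \<le> rpow x a"
  by (simp add: rpow_def)

lemma rpow_le_1: "0 \<le> a \<Longrightarrow> 0 \<le> x \<Longrightarrow> x \<le> 1 \<Longrightarrow> rpow x a \<le> 1"
  by (simp add: rpow_def powr_le1)

lemma le_prod_rpow:
  fixes x :: "'m::finite \<Rightarrow> real"
  assumes "w \<in> prob_simplex" and "0 < \<mu>" and "\<And>k. \<mu> \<le> x k"
  shows "\<mu> \<le> (\<Prod>k\<in>UNIV. rpow (x k) (w $ k))"
proof -
  have "\<mu> = \<mu> powr (\<Sum>k\<in>UNIV. w $ k)"
    using assms(1,2) by (simp add: prob_simplex_sum)
  also have "\<dots> = (\<Prod>k\<in>UNIV. \<mu> powr (w $ k))"
    using assms(2) by (simp add: powr_sum)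
  also have "\<dots> = (\<Prod>k\<in>UNIV. rpow \<mu> (w $ k))"
    using assms(2) by (intro prod.cong) (auto simp: rpow_def)
  also have "\<dots> \<le> (\<Prod>k\<in>UNIV. rpow (x k) (w $ k))"
    using assms by (intro prod_mono) (simp add: rpow_def powr_mono2 prob_simplex_nonneg)
  finally show ?thesis .
qed

lemma prod_rpow_le_rpow:
  fixes x :: "'m::finite \<Rightarrow> real"
  assumes "w \<in> prob_simplex" and "\<And>k. 0 \<le> x k" and "\<And>k. x k \<le> 1"
  shows "(\<Prod>k\<in>UNIV. rpow (x k) (w $ k)) \<le> rpow (x i) (w $ i)"
proof -
  have "(\<Prod>k\<in>UNIV. rpow (x k) (w $ k)) = rpow (x i) (w $ i) * (\<Prod>k\<in>UNIV-{i}. rpow (x k) (w $ k))"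
    by (simp add: prod.remove)
  also have "\<dots> \<le> rpow (x i) (w $ i)"
    using assms by (intro mult_right_le_one_le prod_le_1 prod_nonneg)
      (auto simp: rpow_nonneg rpow_le_1 prob_simplex_nonneg)
  finally show ?thesis .
qed

lemma entropy_le_ln_card:
  fixes p :: "'n::finite \<Rightarrow> real"
  assumes nonneg: "\<And>l. 0 \<le> p l" and sum: "(\<Sum>l\<in>UNIV. p l) = 1"
  shows "(\<Sum>l\<in>UNIV. p l * - ln (p l)) \<le> ln (real CARD('n))"
proof -
  define n where "n = real CARD('n)"
  have n_pos: "0 < n"
    by (simp add: n_def)
  have "p l * - ln (p l) - p l * ln n \<le> 1 / n - p l" for l
  proof (cases "p l = 0")
    case False
    then have p_pos: "0 < p l"
      using nonneg less_eq_real_def by metis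
    have ln_eq: "ln (1 / (n * p l)) = - ln n - ln (p l)"
      using n_pos p_pos by (simp add: ln_div ln_mult)
    have "p l * - ln (p l) - p l * ln n = p l * ln (1 / (n * p l))"
      unfolding ln_eq by (simp add: algebra_simps)
    also have "\<dots> \<le> p l * (1 / (n * p l) - 1)"
      using p_pos n_pos by (intro mult_left_mono ln_le_minus_one) auto
    also have "\<dots> = 1 / n - p l"
      using p_pos by (simp add: field_simps)
    finally show ?thesis .
  qed (use n_pos in simp)
  then have "(\<Sum>l\<in>UNIV. p l * - ln (p l) - p l * ln n) \<le> (\<Sum>l\<in>UNIV. 1 / n - p l)"
    by (rule sum_mono)
  moreover have "(\<Sum>l\<in>UNIV. p l * - ln (p l) - p l * ln n) = (\<Sum>l\<in>UNIV. p l * - ln (p l)) - ln n"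
    by (simp only: sum_subtractf sum_distrib_right[symmetric] sum mult_1)
  moreover have "(\<Sum>l\<in>UNIV. 1 / n - p l) = 0"
    using n_pos by (simp add: sum_subtractf sum n_def)
  ultimately show ?thesis
    by (simp add: n_def)
qed

lemma normalized_cross_entropy_le:
  fixes q :: "'n::finite \<Rightarrow> real"
  assumes nonneg: "\<And>l. 0 \<le> q l" and pos: "0 < q j"
  shows "(\<Sum>l\<in>UNIV. q l / (\<Sum>l'\<in>UNIV. q l') * - ln (q l))
    \<le> ln (real CARD('n)) - ln (q j)"
proof -
  define Z where "Z = (\<Sum>l\<in>UNIV. q l)"
  have "q j \<le> Z"
    unfolding Z_def using nonneg by (intro member_le_sum) auto
  then have Z_pos: "0 < Z"
    using pos by linarith
  have "q l / Z * - ln (q l) = q l / Z * - ln (q l / Z) - q l / Z * ln Z" for l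
    using nonneg[of l] Z_pos by (cases "q l = 0") (auto simp: ln_div algebra_simps)
  then have "(\<Sum>l\<in>UNIV. q l / Z * - ln (q l))
      = (\<Sum>l\<in>UNIV. q l / Z * - ln (q l / Z)) - ln Z"
    using Z_pos by (simp add: sum_subtractf Z_def flip: sum_distrib_right sum_divide_distrib)
  also have "\<dots> \<le> ln (real CARD('n)) - ln Z"
    using nonneg Z_pos by (intro diff_right_mono entropy_le_ln_card)
      (auto simp: Z_def simp flip: sum_divide_distrib)
  also have "\<dots> \<le> ln (real CARD('n)) - ln (q j)"
    using \<open>q j \<le> Z\<close> pos by simp
  finally show ?thesis
    by (simp add: Z_def)
qed

definition pool_weight :: "('m::finite \<Rightarrow> real ^ 'n::finite) \<Rightarrow> real ^ 'm \<Rightarrow> 'n \<Rightarrow> real" where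
  "pool_weight P w j = (\<Prod>k\<in>UNIV. rpow (P k $ j) (w $ k))"

lemma log_pool_eq: "log_pool P w j = pool_weight P w j / (\<Sum>l\<in>UNIV. pool_weight P w l)"
  by (simp add: log_pool_def pool_weight_def)

lemma pool_weight_nonneg: "0 \<le> pool_weight P w j"
  by (simp add: pool_weight_def prod_nonneg rpow_nonneg)

lemma log_pool_nonneg: "0 \<le> log_pool P w j"
  by (simp add: log_pool_eq pool_weight_nonneg sum_nonneg)

lemma ln_pool_weight_le:
  assumes "\<forall>k. P k \<in> prob_simplex" and "w \<in> prob_simplex" and "0 < w $ i"
    and "0 < pool_weight P w l"
  shows "ln (pool_weight P w l) \<le> w $ i * ln (P i $ l)"
proof -
  have le: "pool_weight P w l \<le> rpow (P i $ l) (w $ i)"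
    unfolding pool_weight_def using assms(1,2)
    by (intro prod_rpow_le_rpow) (auto simp: prob_simplex_nonneg prob_simplex_le_1)
  then have "0 < P i $ l"
    using assms prob_simplex_nonneg[of "P i" l] by (auto simp: rpow_def less_eq_real_def)
  then have "ln (pool_weight P w l) \<le> ln (P i $ l powr w $ i)"
    using le assms(3,4) by (intro ln_le_cancel_iff[THEN iffD2]) (simp_all add: rpow_def)
  then show ?thesis
    by simp
qed

lemma dL_ge_imp_report_le:
  assumes "P i \<in> prob_simplex" and "\<zeta> \<le> dL P w i J"
  shows "P i $ J \<le> exp (- \<zeta>)"
proof -
  have "(\<Sum>l\<in>UNIV. log_pool P w l * ln (P i $ l)) \<le> 0"
    using assms(1) by (intro sum_nonpos mult_nonneg_nonpos log_pool_nonneg prob_simplex_ln_le_0)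
  then have "ln (P i $ J) \<le> - \<zeta>"
    using assms(2) by (simp add: dL_def)
  then show ?thesis
    using prob_simplex_nonneg[OF assms(1), of J]
    by (cases "P i $ J = 0") (auto, metis exp_le_cancel_iff exp_ln less_eq_real_def)
qed

lemma weighted_neg_dL_le:
  fixes P :: "'m::finite \<Rightarrow> real ^ 'n::finite"
  assumes S: "\<forall>k. P k \<in> prob_simplex" and W: "w \<in> prob_simplex" and wi: "0 < w $ i"
    and pos: "0 < pool_weight P w J"
  shows "w $ i * - dL P w i J \<le> ln (real CARD('n)) - ln (pool_weight P w J)"
proof -
  have "w $ i * - dL P w i J
      = w $ i * ln (P i $ J) + (\<Sum>l\<in>UNIV. log_pool P w l * (w $ i * - ln (P i $ l)))"
    unfolding dL_def by (simp add: sum_distrib_left right_diff_distrib sum_negf mult.left_commute)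
  also have "\<dots> \<le> (\<Sum>l\<in>UNIV. log_pool P w l * (w $ i * - ln (P i $ l)))"
    using S wi by (simp add: mult_nonneg_nonpos prob_simplex_ln_le_0)
  also have "\<dots> \<le> (\<Sum>l\<in>UNIV. log_pool P w l * - ln (pool_weight P w l))"
  proof (intro sum_mono)
    fix l
    show "log_pool P w l * (w $ i * - ln (P i $ l)) \<le> log_pool P w l * - ln (pool_weight P w l)"
    proof (cases "pool_weight P w l = 0")
      case False
      then have "0 < pool_weight P w l"
        using pool_weight_nonneg less_eq_real_def by metis
      then show ?thesis
        using ln_pool_weight_le[OF S W wi] by (intro mult_left_mono log_pool_nonneg) auto
    qed (simp add: log_pool_eq)
  qed
  also have "\<dots> \<le> ln (real CARD('n)) - ln (pool_weight P w J)"
    unfolding log_pool_eq by (intro normalized_cross_entropy_le pool_weight_nonneg pos)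
  finally show ?thesis .
qed

lemma dL_le_imp_some_report_le:
  fixes P :: "'m::finite \<Rightarrow> real ^ 'n::finite"
  assumes S: "\<forall>k. P k \<in> prob_simplex" and W: "w \<in> prob_simplex" and wi: "0 < w $ i"
    and le: "dL P w i J \<le> - \<zeta> / w $ i"
  shows "\<exists>k. P k $ J \<le> real CARD('n) * exp (- \<zeta>)"
proof (cases "\<exists>k. P k $ J = 0")
  case False
  then have report_pos: "0 < P k $ J" for k
    using S prob_simplex_nonneg less_eq_real_def by metis
  define \<mu> where "\<mu> = Min (range (\<lambda>k. P k $ J))"
  have "\<mu> \<in> range (\<lambda>k. P k $ J)"
    unfolding \<mu>_def by (intro Min_in) auto
  then obtain k0 where k0: "P k0 $ J = \<mu>"
    by auto
  have "\<mu> \<le> pool_weight P w J"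
    unfolding pool_weight_def
    by (intro le_prod_rpow W) (auto simp: \<mu>_def simp flip: k0 intro: report_pos)
  then have weight_pos: "0 < pool_weight P w J"
    using report_pos[of k0] k0 by linarith
  have "\<zeta> \<le> w $ i * - dL P w i J"
    using le wi by (simp add: field_simps)
  also have "\<dots> \<le> ln (real CARD('n)) - ln (pool_weight P w J)"
    by (rule weighted_neg_dL_le[OF S W wi weight_pos])
  finally have "ln (pool_weight P w J) \<le> ln (real CARD('n)) - \<zeta>"
    by simp
  then have "pool_weight P w J \<le> exp (ln (real CARD('n)) - \<zeta>)"
    using weight_pos by (metis exp_le_cancel_iff exp_ln)
  also have "\<dots> = real CARD('n) * exp (- \<zeta>)"
    by (simp add: exp_diff exp_minus field_simps)
  finally show ?thesis
    using \<open>\<mu> \<le> pool_weight P w J\<close> k0 by (intro exI[of _ k0]) linarith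
next
  case True
  then show ?thesis
    by (metis exp_ge_zero mult_nonneg_nonneg of_nat_0_le_iff)
qed

lemma measurable_report_at_outcome:
  fixes P :: "'a \<Rightarrow> 'm \<Rightarrow> real ^ 'n::finite"
  assumes "\<forall>k. (\<lambda>x. P x k) \<in> borel_measurable M" and "J \<in> measurable M (count_space UNIV)"
  shows "(\<lambda>x. P x k $ J x) \<in> borel_measurable M"
proof (rule measurable_compose_countable'[OF _ assms(2)])
  show "(\<lambda>x. P x k $ j) \<in> borel_measurable M" for j
    by (rule borel_measurable_continuous_on[OF linear_continuous_on[OF bounded_linear_vec_nth]])
      (use assms(1) in blast)
  show "countable (UNIV :: 'n set)"
    by (rule countable_finite) simp
qed

lemma calibrated_prob_report_at_outcome_le:
  fixes P :: "'a \<Rightarrow> 'm \<Rightarrow> real ^ 'n::finite"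
  assumes "prob_space M" and PM: "\<forall>k. (\<lambda>x. P x k) \<in> borel_measurable M"
    and JM: "J \<in> measurable M (count_space UNIV)"
    and cal: "calibrated M P J" and "0 \<le> c"
  shows "measure M {x\<in>space M. P x k $ J x \<le> c} \<le> real CARD('n) * c"
proof -
  interpret prob_space M by fact
  have [measurable]: "J \<in> M \<rightarrow>\<^sub>M count_space UNIV" "(\<lambda>x. P x k) \<in> borel_measurable M"
    using JM PM by auto
  define A where "A j = {x\<in>space M. J x = j \<and> P x k \<in> {v. v $ j \<le> c}}" for j
  have coord_le_borel [measurable]: "{v::real^'n. v $ j \<le> c} \<in> sets borel" for j
    by measurable
  have A_sets: "A j \<in> sets M" for j
    unfolding A_def by measurable
  have A_le: "measure M (A j) \<le> c" for j
  proof -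
    have "measure M (A j) = (\<integral>x. indicator {v. v $ j \<le> c} (P x k) * (P x k $ j) \<partial>M)"
      using cal coord_le_borel unfolding calibrated_def A_def by blast
    also have "\<dots> \<le> c"
      \<comment> \<open>reports are not assumed nonnegative here, so the integrand may fail to be
        integrable; its integral is then 0\<close>
    proof (cases "integrable M (\<lambda>x. indicator {v. v $ j \<le> c} (P x k) * (P x k $ j))")
      case True
      then show ?thesis
        using \<open>0 \<le> c\<close> by (intro integral_le_const) (auto simp: indicator_def)
    qed (simp add: not_integrable_integral_eq \<open>0 \<le> c\<close>)
    finally show ?thesis .
  qed
  have "measure M {x\<in>space M. P x k $ J x \<le> c} \<le> measure M (\<Union>j. A j)"
    by (intro finite_measure_mono) (auto simp: A_def A_sets)
  also have "\<dots> \<le> (\<Sum>j\<in>UNIV. measure M (A j))"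
    by (intro finite_measure_subadditive_finite) (auto simp: A_sets)
  also have "\<dots> \<le> (\<Sum>j\<in>(UNIV::'n set). c)"
    by (rule sum_mono) (rule A_le)
  finally show ?thesis
    by simp
qed

lemma calibrated_prob_some_report_at_outcome_le:
  fixes P :: "'a \<Rightarrow> 'm::finite \<Rightarrow> real ^ 'n::finite"
  assumes "prob_space M" and PM: "\<forall>k. (\<lambda>x. P x k) \<in> borel_measurable M"
    and JM: "J \<in> measurable M (count_space UNIV)"
    and "calibrated M P J" and "0 \<le> c"
  shows "measure M {x\<in>space M. \<exists>k. P x k $ J x \<le> c} \<le> real CARD('m) * real CARD('n) * c"
proof -
  interpret prob_space M by fact
  have [measurable]: "(\<lambda>x. P x k $ J x) \<in> borel_measurable M" for k
    using measurable_report_at_outcome[OF PM JM] .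
  have "{x\<in>space M. \<exists>k. P x k $ J x \<le> c} = (\<Union>k. {x\<in>space M. P x k $ J x \<le> c})"
    by blast
  also have "measure M \<dots> \<le> (\<Sum>k\<in>UNIV. measure M {x\<in>space M. P x k $ J x \<le> c})"
    by (rule finite_measure_subadditive_finite) auto
  also have "\<dots> \<le> (\<Sum>k\<in>(UNIV::'m set). real CARD('n) * c)"
    using assms by (intro sum_mono calibrated_prob_report_at_outcome_le)
  finally show ?thesis
    by simp
qed

theorem lemma4:
  fixes M :: "'a measure"
    and P :: "'a \<Rightarrow> 'm::finite \<Rightarrow> real ^ 'n::finite"
    and J :: "'a \<Rightarrow> 'n"
    and w :: "real ^ 'm" and i :: 'm and \<zeta> :: real
  assumes "prob_space M"
    and "\<forall>k. (\<lambda>x. P x k) \<in> borel_measurable M"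
    and "J \<in> measurable M (count_space UNIV)"
    and "\<forall>x\<in>space M. \<forall>k. P x k \<in> prob_simplex"
    and "calibrated M P J"
    and "w \<in> prob_simplex"
    and "\<zeta> \<ge> 0"
  shows "measure M {x\<in>space M. dL (P x) w i (J x) \<ge> \<zeta>} \<le> real CARD('n) * exp (- \<zeta>)
       \<and> (w $ i > 0 \<longrightarrow>
         measure M {x\<in>space M. dL (P x) w i (J x) \<le> - \<zeta> / w $ i}
           \<le> real CARD('m) * real CARD('n) ^ 2 * exp (- \<zeta> / real CARD('n)))"
proof (intro conjI impI)
  interpret prob_space M by fact
  have [measurable]: "(\<lambda>x. P x k $ J x) \<in> borel_measurable M" for k
    using measurable_report_at_outcome[OF assms(2,3)] .
  let ?n = "real CARD('n)"
  have "measure M {x\<in>space M. dL (P x) w i (J x) \<ge> \<zeta>}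
      \<le> measure M {x\<in>space M. P x i $ J x \<le> exp (- \<zeta>)}"
    using assms(4) by (intro finite_measure_mono) (auto intro: dL_ge_imp_report_le)
  also have "\<dots> \<le> ?n * exp (- \<zeta>)"
    using assms(1-3,5) by (intro calibrated_prob_report_at_outcome_le) auto
  finally show "measure M {x\<in>space M. dL (P x) w i (J x) \<ge> \<zeta>} \<le> ?n * exp (- \<zeta>)" .
  assume "w $ i > 0"
  have "measure M {x\<in>space M. dL (P x) w i (J x) \<le> - \<zeta> / w $ i}
      \<le> measure M {x\<in>space M. \<exists>k. P x k $ J x \<le> ?n * exp (- \<zeta>)}"
    using assms(4,6) \<open>w $ i > 0\<close>
    by (intro finite_measure_mono) (auto intro: dL_le_imp_some_report_le)
  also have "\<dots> \<le> real CARD('m) * ?n * (?n * exp (- \<zeta>))"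
    using assms(1-3,5) by (intro calibrated_prob_some_report_at_outcome_le) auto
  also have "\<dots> \<le> real CARD('m) * ?n ^ 2 * exp (- \<zeta> / ?n)"
    using assms(7) by (simp add: power2_eq_square divide_le_eq mult_le_cancel_left1)
  finally show "measure M {x\<in>space M. dL (P x) w i (J x) \<le> - \<zeta> / w $ i}
      \<le> real CARD('m) * ?n ^ 2 * exp (- \<zeta> / ?n)" .
qed

end
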